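(* Let $\mathfrak g$ be of type $A_n$ with $n\ge2$ and $r=\frac{n+1}{\gcd(n+1,2)}$. For every $k$ with $1\le k\le n$ and $k\ne1,r$, one has $d_k\lambda_1+\lambda_k\in\Psi_{\min}$, where $d_k=2r-k$ if $r<k<n+1$ and $d_k=r-k$ otherwise.
   Context: Type $A_n$ has Dynkin diagram $1-2-\cdots-n$, with fundamental weights $\lambda_1,\dots,\lambda_n$, root lattice $Q$ and dominant integral weights $\Lambda^+=\bigoplus_i\mathbb N\lambda_i$. $\Psi=\{\lambda\in\Lambda^+:2\lambda\in Q\}$ and $\Psi_{\min}=\{\lambda\in\Psi\setminus\{0\}:\lambda\ne\mu_1+\mu_2\text{ for all }\mu_1,\mu_2\in\Psi\setminus\{0\}\}$. *)

theory Defs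
  imports Main
begin

text \<open>Type A_n. A weight is represented by its coordinates with respect to the
fundamental weights lambda_1..lambda_n, as a function nat => int which is
required to vanish outside {1..n}.\<close>

type_synonym weight = "nat \<Rightarrow> int"

definition is_weight :: "nat \<Rightarrow> weight \<Rightarrow> bool" where
  "is_weight n \<mu> \<longleftrightarrow> (\<forall>i. i \<notin> {1..n} \<longrightarrow> \<mu> i = 0)"

definition fund_weight :: "nat \<Rightarrow> weight" where
  "fund_weight k = (\<lambda>i. if i = k then 1 else 0)"

text \<open>Simple root alpha_j of A_n in fundamental-weight coordinates
(row j of the Cartan matrix): alpha_j = 2 lambda_j - lambda_(j-1) - lambda_(j+1).\<close>
definition simple_root :: "nat \<Rightarrow> nat \<Rightarrow> weight" where
  "simple_root n j = (\<lambda>i. if i \<notin> {1..n} then 0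
                          else if i = j then 2
                          else if i + 1 = j \<or> j + 1 = i then -1 else 0)"

definition root_lattice :: "nat \<Rightarrow> weight set" where
  "root_lattice n = {\<mu>. \<exists>a :: nat \<Rightarrow> int.
       \<mu> = (\<lambda>i. \<Sum>j\<in>{1..n}. a j * simple_root n j i)}"

definition dominant :: "nat \<Rightarrow> weight set" where
  "dominant n = {\<mu>. is_weight n \<mu> \<and> (\<forall>i. 0 \<le> \<mu> i)}"

definition Psi :: "nat \<Rightarrow> weight set" where
  "Psi n = {\<mu> \<in> dominant n. (\<lambda>i. 2 * \<mu> i) \<in> root_lattice n}"

definition Psi_min :: "nat \<Rightarrow> weight set" where
  "Psi_min n = {\<mu> \<in> Psi n - {(\<lambda>_. 0)}.
      \<forall>\<mu>1 \<mu>2. \<mu>1 \<in> Psi n - {(\<lambda>_. 0)} \<longrightarrow> \<mu>2 \<in> Psi n - {(\<lambda>_. 0)} \<longrightarrow>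
               \<mu> \<noteq> (\<lambda>i. \<mu>1 i + \<mu>2 i)}"

end

theory Submission
  imports Defs
begin

text \<open>Writing \<open>\<mu> = \<Sum> m\<^sub>i \<lambda>\<^sub>i\<close>, the root lattice of \<open>A\<^sub>n\<close> consists exactly of the weights with
\<open>\<Sum> i m\<^sub>i \<equiv> 0 (mod n+1)\<close>, so \<open>2\<mu> \<in> Q\<close> means \<open>n + 1\<close> divides \<open>2 \<Sum> i m\<^sub>i\<close>, i.e. \<open>r\<close> divides
\<open>\<Sum> i m\<^sub>i\<close>. For \<open>\<mu> = d\<^sub>k\<lambda>\<^sub>1 + \<lambda>\<^sub>k\<close> this sum is \<open>d\<^sub>k + k \<in> {r, 2r}\<close>, so \<open>\<mu> \<in> \<Psi>\<close>. In a
decomposition \<open>\<mu> = \<mu>\<^sub>1 + \<mu>\<^sub>2\<close> inside \<open>\<Psi>\<close> one summand avoids \<open>\<lambda>\<^sub>k\<close> and hence is a positive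
multiple \<open>c\<lambda>\<^sub>1\<close> with \<open>r | c\<close>; but \<open>c \<le> d\<^sub>k < r\<close>.\<close>

text \<open>Zero for \<open>j \<notin> {1..n}\<close>, so that \<open>\<alpha>\<^sub>j = 2\<lambda>\<^sub>j - \<lambda>\<^sub>j\<^sub>-\<^sub>1 - \<lambda>\<^sub>j\<^sub>+\<^sub>1\<close>
holds also for \<open>j = 1\<close> and \<open>j = n\<close>.\<close>
definition fund_weight_on :: "nat \<Rightarrow> nat \<Rightarrow> weight" where
  "fund_weight_on n j = (\<lambda>i. if i \<in> {1..n} \<and> i = j then 1 else 0)"

text \<open>The residue of \<open>weight_index n \<mu>\<close> mod \<open>n + 1\<close> is the class of \<open>\<mu>\<close> in \<open>\<Lambda>/Q \<cong> \<int>/(n+1)\<close>.\<close>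
definition weight_index :: "nat \<Rightarrow> weight \<Rightarrow> int" where
  "weight_index n \<mu> = (\<Sum>i\<in>{1..n}. int i * \<mu> i)"

lemma fund_weight_on_eq_fund_weight: "j \<in> {1..n} \<Longrightarrow> fund_weight_on n j = fund_weight j"
  unfolding fund_weight_on_def fund_weight_def by auto

lemma fund_weight_on_eq_0: "j \<notin> {1..n} \<Longrightarrow> fund_weight_on n j = (\<lambda>_. 0)"
  unfolding fund_weight_on_def fund_weight_def by auto

lemma simple_root_eq:
  "j \<in> {1..n} \<Longrightarrow>
   simple_root n j = (\<lambda>i. 2 * fund_weight_on n j i - fund_weight_on n (j - 1) i - fund_weight_on n (j + 1) i)"
  unfolding simple_root_def fund_weight_on_def by (rule ext) auto

lemma weight_eq_sum_fund_weight_on: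
  assumes "is_weight n \<mu>"
  shows "\<mu> = (\<lambda>i. \<Sum>j\<in>{1..n}. \<mu> j * fund_weight_on n j i)"
proof
  fix i
  show "\<mu> i = (\<Sum>j\<in>{1..n}. \<mu> j * fund_weight_on n j i)"
    using assms unfolding is_weight_def fund_weight_on_def
    by (cases "i \<in> {1..n}") (auto simp: if_distrib[where f = "\<lambda>c. x * c" for x] cong: if_cong)
qed

lemma root_lattice_zero: "(\<lambda>_. 0) \<in> root_lattice n"
  unfolding root_lattice_def by (rule CollectI, rule exI[of _ "\<lambda>_. 0"]) simp

lemma root_lattice_add:
  assumes "x \<in> root_lattice n" "y \<in> root_lattice n"
  shows "(\<lambda>i. x i + y i) \<in> root_lattice n"
proof -
  obtain a b where "x = (\<lambda>i. \<Sum>j\<in>{1..n}. a j * simple_root n j i)"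
    and "y = (\<lambda>i. \<Sum>j\<in>{1..n}. b j * simple_root n j i)"
    using assms unfolding root_lattice_def by blast
  then show ?thesis
    unfolding root_lattice_def
    by (intro CollectI exI[of _ "\<lambda>j. a j + b j"]) (simp add: sum.distrib distrib_right)
qed

lemma root_lattice_scale:
  assumes "x \<in> root_lattice n"
  shows "(\<lambda>i. c * x i) \<in> root_lattice n"
proof -
  obtain a where "x = (\<lambda>i. \<Sum>j\<in>{1..n}. a j * simple_root n j i)"
    using assms unfolding root_lattice_def by blast
  then show ?thesis
    unfolding root_lattice_def
    by (intro CollectI exI[of _ "\<lambda>j. c * a j"]) (simp add: sum_distrib_left mult.assoc)
qed

lemma root_lattice_sum:
  assumes "finite J" "\<And>j. j \<in> J \<Longrightarrow> v j \<in> root_lattice n"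
  shows "(\<lambda>i. \<Sum>j\<in>J. v j i) \<in> root_lattice n"
  using assms by (induction J rule: finite_induct) (simp_all add: root_lattice_zero root_lattice_add)

lemma simple_root_in_root_lattice: "j \<in> {1..n} \<Longrightarrow> simple_root n j \<in> root_lattice n"
  unfolding root_lattice_def
  by (intro CollectI exI[of _ "\<lambda>j'. if j' = j then 1 else 0"] ext)
     (simp add: if_distrib[where f = "\<lambda>c. c * x" for x] cong: if_cong)

text \<open>Telescoping: \<open>(j+2)\<lambda>\<^sub>1 - \<lambda>\<^sub>j\<^sub>+\<^sub>2 = 2((j+1)\<lambda>\<^sub>1 - \<lambda>\<^sub>j\<^sub>+\<^sub>1) - (j\<lambda>\<^sub>1 - \<lambda>\<^sub>j) + \<alpha>\<^sub>j\<^sub>+\<^sub>1\<close>.\<close>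
lemma fund_weight_on_diff_in_root_lattice:
  "j \<le> n + 1 \<Longrightarrow> (\<lambda>i. int j * fund_weight_on n 1 i - fund_weight_on n j i) \<in> root_lattice n"
proof (induction j rule: induct_nat_012)
  case 0
  then show ?case using root_lattice_zero[of n] by (simp add: fund_weight_on_eq_0)
next
  case 1
  then show ?case using root_lattice_zero[of n] by simp
next
  case (ge2 j)
  let ?D = "\<lambda>j i. int j * fund_weight_on n 1 i - fund_weight_on n j i"
  have "(\<lambda>i. 2 * ?D (Suc j) i + (-1) * ?D j i + simple_root n (Suc j) i) \<in> root_lattice n"
    using ge2 by (intro root_lattice_add root_lattice_scale simple_root_in_root_lattice) simp_all
  moreover have "(\<lambda>i. 2 * ?D (Suc j) i + (-1) * ?D j i + simple_root n (Suc j) i) = ?D (Suc (Suc j))"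
    using ge2.prems by (subst simple_root_eq) (auto simp: algebra_simps)
  ultimately show ?case by simp
qed

lemma weight_index_fund_weight_on:
  "weight_index n (fund_weight_on n m) = (if m \<in> {1..n} then int m else 0)"
  unfolding weight_index_def fund_weight_on_def
  by (simp add: if_distrib[where f = "\<lambda>c. x * c" for x] cong: if_cong)

lemma weight_index_simple_root:
  assumes "j \<in> {1..n}"
  shows "weight_index n (simple_root n j) = (if j = n then int (n + 1) else 0)"
proof -
  have "weight_index n (simple_root n j) =
        2 * weight_index n (fund_weight_on n j) - weight_index n (fund_weight_on n (j - 1))
          - weight_index n (fund_weight_on n (j + 1))"
    using assms unfolding simple_root_eq[OF assms] weight_index_def
    by (simp add: sum.distrib sum_subtractf sum_distrib_left algebra_simps)
  then show ?thesis
    using assms by (auto simp: weight_index_fund_weight_on)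
qed

lemma weight_index_root_lattice:
  assumes "v \<in> root_lattice n"
  shows "int (n + 1) dvd weight_index n v"
proof -
  obtain a where v: "v = (\<lambda>i. \<Sum>j\<in>{1..n}. a j * simple_root n j i)"
    using assms unfolding root_lattice_def by blast
  have "weight_index n v = (\<Sum>i\<in>{1..n}. \<Sum>j\<in>{1..n}. int i * (a j * simple_root n j i))"
    unfolding v weight_index_def by (simp add: sum_distrib_left)
  also have "\<dots> = (\<Sum>j\<in>{1..n}. a j * weight_index n (simple_root n j))"
    unfolding weight_index_def by (subst sum.swap) (simp add: sum_distrib_left algebra_simps)
  finally show ?thesis
    by (auto simp: weight_index_simple_root intro!: dvd_sum)
qed

lemma root_lattice_iff_weight_index:
  assumes "is_weight n \<mu>"
  shows "\<mu> \<in> root_lattice n \<longleftrightarrow> int (n + 1) dvd weight_index n \<mu>"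
proof
  assume "int (n + 1) dvd weight_index n \<mu>"
  then obtain m where m: "weight_index n \<mu> = int (n + 1) * m" by blast
  let ?D = "\<lambda>j i. int j * fund_weight_on n 1 i - fund_weight_on n j i"
  have "(\<lambda>i. m * ?D (n + 1) i + (\<Sum>j\<in>{1..n}. (- \<mu> j) * ?D j i)) \<in> root_lattice n"
    by (intro root_lattice_add root_lattice_scale root_lattice_sum fund_weight_on_diff_in_root_lattice)
       simp_all
  moreover have "(\<lambda>i. m * ?D (n + 1) i + (\<Sum>j\<in>{1..n}. (- \<mu> j) * ?D j i)) = \<mu>"
  proof
    fix i
    have "m * int (n + 1) * fund_weight_on n 1 i = weight_index n \<mu> * fund_weight_on n 1 i"
      using m by (simp add: mult_ac)
    also have "\<dots> = (\<Sum>j\<in>{1..n}. \<mu> j * (int j * fund_weight_on n 1 i))"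
      unfolding weight_index_def by (subst sum_distrib_right) (simp add: mult_ac)
    finally have "m * int (n + 1) * fund_weight_on n 1 i = \<dots>" .
    moreover have "\<mu> i = (\<Sum>j\<in>{1..n}. \<mu> j * fund_weight_on n j i)"
      by (subst weight_eq_sum_fund_weight_on[OF assms]) simp
    ultimately show "m * ?D (n + 1) i + (\<Sum>j\<in>{1..n}. (- \<mu> j) * ?D j i) = \<mu> i"
      by (simp add: fund_weight_on_eq_0 sum_subtractf right_diff_distrib algebra_simps)
  qed
  ultimately show "\<mu> \<in> root_lattice n" by simp
qed (rule weight_index_root_lattice)

lemma Psi_iff_weight_index:
  "\<mu> \<in> Psi n \<longleftrightarrow> \<mu> \<in> dominant n \<and> int (n + 1) dvd 2 * weight_index n \<mu>"
proof -
  have "\<mu> \<in> dominant n \<Longrightarrow> is_weight n (\<lambda>i. 2 * \<mu> i)"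
    unfolding dominant_def is_weight_def by simp
  moreover have "weight_index n (\<lambda>i. 2 * \<mu> i) = 2 * weight_index n \<mu>"
    unfolding weight_index_def by (simp add: sum_distrib_left algebra_simps)
  ultimately show ?thesis
    unfolding Psi_def by (auto simp: root_lattice_iff_weight_index)
qed

lemma dvd_mult_iff_div_gcd_dvd:
  fixes a b c :: int
  assumes "a \<noteq> 0"
  shows "a dvd b * c \<longleftrightarrow> a div gcd a b dvd c"
proof -
  define g where "g = gcd a b"
  have g: "g \<noteq> 0" using assms by (simp add: g_def)
  have a: "a = g * (a div g)" and b: "b = g * (b div g)" by (simp_all add: g_def)
  have "a dvd b * c \<longleftrightarrow> a div g dvd b div g * c"
    using g by (subst (1 2) a, subst b) (simp add: mult.assoc)
  also have "\<dots> \<longleftrightarrow> a div g dvd c"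
    using div_gcd_coprime[of a b] assms by (simp add: g_def coprime_dvd_mult_right_iff)
  finally show ?thesis unfolding g_def .
qed

lemma dvd_double_iff_div_gcd_2_dvd:
  "0 < m \<Longrightarrow> int m dvd 2 * c \<longleftrightarrow> int (m div gcd m 2) dvd c"
  using dvd_mult_iff_div_gcd_dvd[of "int m" 2 c] by (simp add: zdiv_int flip: gcd_int_int_eq)

lemma le_double_div_gcd_2: "m \<le> 2 * (m div gcd m (2 :: nat))"
proof -
  have "m = gcd m 2 * (m div gcd m 2)" by simp
  also have "\<dots> \<le> 2 * (m div gcd m 2)"
    by (intro mult_right_mono) (simp_all add: gcd_le2_nat)
  finally show ?thesis .
qed

lemma Psi_multiple_of_fund_weight_1_ge:
  assumes "\<nu> \<in> Psi n" "\<nu> \<noteq> (\<lambda>_. 0)" "\<And>i. i \<noteq> 1 \<Longrightarrow> \<nu> i = 0"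
  shows "int ((n + 1) div gcd (n + 1) 2) \<le> \<nu> 1"
proof -
  have dom: "\<nu> \<in> dominant n" and dvd: "int (n + 1) dvd 2 * weight_index n \<nu>"
    using assms(1) by (simp_all add: Psi_iff_weight_index)
  have "\<nu> 1 = 0" if "n = 0"
    using dom that unfolding dominant_def is_weight_def by simp
  moreover have "weight_index n \<nu> = (\<Sum>i\<in>{1..n}. if i = 1 then \<nu> 1 else 0)"
    unfolding weight_index_def using assms(3) by (intro sum.cong) auto
  ultimately have "weight_index n \<nu> = \<nu> 1"
    by (cases "n = 0") simp_all
  moreover have "\<nu> 1 \<noteq> 0" using assms(2,3) by (metis ext)
  moreover have "0 \<le> \<nu> 1" using dom by (simp add: dominant_def)
  ultimately show ?thesis
    using dvd dvd_double_iff_div_gcd_2_dvd[of "n + 1" "\<nu> 1"] by (simp add: zdvd_imp_le)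
qed

lemma Psi_minI:
  assumes "\<mu> \<in> Psi n" "k \<noteq> 1" "\<mu> k = 1" "\<And>i. i \<noteq> 1 \<Longrightarrow> i \<noteq> k \<Longrightarrow> \<mu> i = 0"
    and "\<mu> 1 < int ((n + 1) div gcd (n + 1) 2)"
  shows "\<mu> \<in> Psi_min n"
  unfolding Psi_min_def
proof (intro CollectI conjI allI impI notI)
  show "\<mu> \<in> Psi n - {\<lambda>_. 0}" using assms(1,3) by auto
next
  fix \<mu>1 \<mu>2
  assume \<mu>1: "\<mu>1 \<in> Psi n - {\<lambda>_. 0}" and \<mu>2: "\<mu>2 \<in> Psi n - {\<lambda>_. 0}"
    and sum: "\<mu> = (\<lambda>i. \<mu>1 i + \<mu>2 i)"
  have nonneg: "0 \<le> \<mu>1 i" "0 \<le> \<mu>2 i" for i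
    using \<mu>1 \<mu>2 by (simp_all add: Psi_def dominant_def)
  have off: "\<mu>1 i = 0" "\<mu>2 i = 0" if "i \<noteq> 1" "i \<noteq> k" for i
    using assms(4)[OF that] fun_cong[OF sum, of i] nonneg[of i] by simp_all
  have "\<mu>1 k = 0 \<or> \<mu>2 k = 0"
    using fun_cong[OF sum, of k] assms(3) nonneg[of k] by linarith
  moreover have "\<not> int ((n + 1) div gcd (n + 1) 2) \<le> \<mu>1 1" "\<not> int ((n + 1) div gcd (n + 1) 2) \<le> \<mu>2 1"
    using fun_cong[OF sum, of 1] assms(5) nonneg[of 1] by linarith+
  ultimately show False
    using Psi_multiple_of_fund_weight_1_ge[of _ n] \<mu>1 \<mu>2 off by (metis DiffE singletonI)
qed

theorem lemma4p5:
  fixes n k :: nat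
  assumes "n \<ge> 2"
    and "1 \<le> k" "k \<le> n" "k \<noteq> 1" "k \<noteq> (n + 1) div gcd (n + 1) 2"
  shows "(let r = int ((n + 1) div gcd (n + 1) 2);
              d = (if r < int k \<and> int k < int n + 1 then 2 * r - int k else r - int k)
          in (\<lambda>i. d * fund_weight 1 i + fund_weight k i)) \<in> Psi_min n"
proof -
  define r where "r = int ((n + 1) div gcd (n + 1) 2)"
  define d where "d = (if r < int k \<and> int k < int n + 1 then 2 * r - int k else r - int k)"
  define \<mu> where "\<mu> = (\<lambda>i. d * fund_weight 1 i + fund_weight k i)"
  have "int (n + 1) \<le> 2 * r" using le_double_div_gcd_2[of "n + 1"] unfolding r_def by linarith
  then have d: "0 \<le> d" "d < r" and "d + int k = r \<or> d + int k = 2 * r"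
    using assms unfolding d_def r_def by auto
  then have "r dvd d + int k" by auto
  then have "int (n + 1) dvd 2 * (d + int k)"
    unfolding r_def by (subst dvd_double_iff_div_gcd_2_dvd) simp_all
  moreover have "weight_index n \<mu> = d * weight_index n (fund_weight_on n 1) + weight_index n (fund_weight_on n k)"
    using assms unfolding \<mu>_def weight_index_def
    by (simp add: fund_weight_on_eq_fund_weight sum.distrib sum_distrib_left algebra_simps)
  then have "weight_index n \<mu> = d + int k"
    using assms by (simp add: weight_index_fund_weight_on)
  moreover have "\<mu> \<in> dominant n"
    using assms d unfolding \<mu>_def dominant_def is_weight_def fund_weight_def by auto
  ultimately have "\<mu> \<in> Psi n" by (simp add: Psi_iff_weight_index)
  then have "\<mu> \<in> Psi_min n"
    using assms d by (intro Psi_minI) (auto simp: \<mu>_def fund_weight_def r_def)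
  then show ?thesis unfolding Let_def \<mu>_def d_def r_def .
qed

end
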